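(* Let $A_X,A_Z,B_X,B_Z\subseteq\mathbb{F}_q^n$ be linear codes with $A_X^\perp\subseteq A_Z$ and $B_X^\perp\subseteq B_Z$ (so that $\mathrm{CSS}(A_X,A_Z)$ and $\mathrm{CSS}(B_X,B_Z)$ are CSS codes). Define \[ C_X=(A_X\cap B_X)+B_Z^\perp,\qquad C_Z=(A_Z\cap B_Z)+B_X^\perp . \] Then \[ C_X^\perp=(A_X^\perp\cap B_Z)+B_X^\perp,\qquad C_Z^\perp=(A_Z^\perp\cap B_X)+B_Z^\perp, \] and $C_X^\perp\subseteq C_Z$, so that $\mathrm{CSS}(C_X,C_Z)$ is a well-defined CSS code.
   Context: $q$ is a prime power. For $C\subseteq\mathbb{F}_q^n$ linear, $C^\perp=\{y\in\mathbb{F}_q^n: \sum_i y_ic_i=0\ \forall c\in C\}$. For linear codes $C_X,C_Z$ with $C_X^\perp\subseteq C_Z$, $\mathrm{CSS}(C_X,C_Z)=\mathrm{span}\{\sum_{y\in C_X^\perp}|x+y\rangle: x\in C_Z\}\subseteq(\mathbb{C}^q)^{\otimes n}$. *)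

theory Defs
  imports "HOL-Analysis.Analysis"
begin

text \<open>Vectors in F_q^n are modelled as 'a^'n, where 'a is a finite field (so its
cardinality q is a prime power) and 'n is a finite index type with CARD('n) = n.\<close>

definition linear_code :: "('a::field ^ 'n) set \<Rightarrow> bool" where
  "linear_code C \<longleftrightarrow> 0 \<in> C \<and> (\<forall>x\<in>C. \<forall>y\<in>C. x + y \<in> C) \<and> (\<forall>c. \<forall>x\<in>C. c *s x \<in> C)"

definition dual_code :: "('a::field ^ 'n::finite) set \<Rightarrow> ('a ^ 'n) set" where
  "dual_code C = {y. \<forall>c\<in>C. (\<Sum>i\<in>UNIV. y $ i * c $ i) = 0}"

definition code_sum :: "('a::field ^ 'n) set \<Rightarrow> ('a ^ 'n) set \<Rightarrow> ('a ^ 'n) set" where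
  "code_sum A B = {a + b | a b. a \<in> A \<and> b \<in> B}"

end

theory Submission
  imports Defs
begin

text \<open>Duality turns sums of codes into intersections and, because a linear code over a
finite-dimensional space is its own double dual, intersections into sums. Hence
\<open>C\<^sub>X\<^sup>\<bottom> = (A\<^sub>X\<^sup>\<bottom> + B\<^sub>X\<^sup>\<bottom>) \<inter> B\<^sub>Z\<close>, and since \<open>B\<^sub>X\<^sup>\<bottom> \<subseteq> B\<^sub>Z\<close> the modular law moves the
intersection onto the first summand; symmetrically for \<open>C\<^sub>Z\<close>. The inclusion
\<open>C\<^sub>X\<^sup>\<bottom> \<subseteq> C\<^sub>Z\<close> is then immediate from \<open>A\<^sub>X\<^sup>\<bottom> \<subseteq> A\<^sub>Z\<close>.\<close>

context vector_space
begin

lemma exists_linear_functional_vanishing_on_subspace: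
  assumes "subspace S" "y \<notin> S"
  obtains f where "Vector_Spaces.linear scale (*) f" "\<And>x. x \<in> S \<Longrightarrow> f x = 0" "f y = 1"
proof -
  interpret functionals: vector_space_pair scale "(*) :: 'a \<Rightarrow> 'a \<Rightarrow> 'a" ..
  obtain B where B: "B \<subseteq> S" "independent B" "S \<subseteq> span B"
    using maximal_independent_subset by blast
  have "span B = S"
    using B assms(1) span_minimal by blast
  then have "y \<notin> span B" using assms(2) by simp
  then have indep: "independent (insert y B)" using B(2) by (rule independent_insertI)
  define f where "f = functionals.construct (insert y B) (\<lambda>b. if b = y then 1 else 0)"
  have lin: "Vector_Spaces.linear scale (*) f"
    unfolding f_def using indep by (rule functionals.linear_construct)
  have "f b = 0" if "b \<in> B" for b
    using that \<open>y \<notin> span B\<close> span_base indep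
    by (auto simp: f_def functionals.construct_basis)
  then have "f x = 0" if "x \<in> S" for x
    using functionals.linear_eq_0_on_span[OF lin] that \<open>span B = S\<close> by blast
  moreover have "f y = 1"
    unfolding f_def using indep by (simp add: functionals.construct_basis)
  ultimately show thesis using lin that by blast
qed

end

lemma linear_functional_eq_sum:
  fixes f :: "'a::field ^ 'n::finite \<Rightarrow> 'a"
  assumes "Vector_Spaces.linear (*s) (*) f"
  shows "f x = (\<Sum>i\<in>UNIV. f (axis i 1) * x $ i)"
proof -
  interpret f: Vector_Spaces.linear "(*s)" "(*) :: 'a \<Rightarrow> 'a \<Rightarrow> 'a" f by (rule assms)
  have "f x = f (\<Sum>i\<in>UNIV. x $ i *s axis i 1)" by (simp add: basis_expansion)
  also have "\<dots> = (\<Sum>i\<in>UNIV. f (axis i 1) * x $ i)" by (simp add: f.sum f.scale mult.commute)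
  finally show ?thesis .
qed

lemma linear_code_iff_subspace: "linear_code C \<longleftrightarrow> vec.subspace C"
  unfolding linear_code_def vec.subspace_def by blast

lemma linear_code_dual_code: "linear_code (dual_code C)"
  unfolding linear_code_def dual_code_def
  by (auto simp: algebra_simps sum.distrib sum_distrib_left[symmetric] mult.assoc)

lemma linear_code_code_sum:
  "linear_code A \<Longrightarrow> linear_code B \<Longrightarrow> linear_code (code_sum A B)"
  unfolding linear_code_iff_subspace code_sum_def by (rule vec.subspace_sums)

lemma code_sum_mono: "A \<subseteq> A' \<Longrightarrow> B \<subseteq> B' \<Longrightarrow> code_sum A B \<subseteq> code_sum A' B'"
  unfolding code_sum_def by blast

lemma dual_code_antimono: "A \<subseteq> B \<Longrightarrow> dual_code B \<subseteq> dual_code A"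
  unfolding dual_code_def by blast

lemma subset_dual_code_dual_code: "C \<subseteq> dual_code (dual_code C)"
  unfolding dual_code_def by (auto simp: mult.commute)

lemma dual_code_dual_code:
  fixes C :: "('a::field ^ 'n::finite) set"
  assumes "linear_code C"
  shows "dual_code (dual_code C) = C"
proof
  show "dual_code (dual_code C) \<subseteq> C"
  proof (rule subsetI, rule ccontr)
    fix y assume y: "y \<in> dual_code (dual_code C)" and "y \<notin> C"
    then obtain f where lin: "Vector_Spaces.linear (*s) (*) f"
      and f_C: "\<And>x. x \<in> C \<Longrightarrow> f x = 0" and "f y = 1"
      using assms vec.exists_linear_functional_vanishing_on_subspace
      unfolding linear_code_iff_subspace by metis
    define z where "z = (\<chi> i. f (axis i 1))"
    have f_eq: "f x = (\<Sum>i\<in>UNIV. z $ i * x $ i)" for x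
      unfolding z_def using lin by (simp add: linear_functional_eq_sum)
    have "z \<in> dual_code C"
      unfolding dual_code_def using f_C f_eq by auto
    then have "(\<Sum>i\<in>UNIV. y $ i * z $ i) = 0"
      using y unfolding dual_code_def by blast
    then have "f y = 0"
      by (simp add: f_eq mult.commute)
    with \<open>f y = 1\<close> show False by simp
  qed
qed (rule subset_dual_code_dual_code)

lemma dual_code_code_sum:
  assumes "0 \<in> A" "0 \<in> B"
  shows "dual_code (code_sum A B) = dual_code A \<inter> dual_code B"
proof
  have "A \<subseteq> code_sum A B" "B \<subseteq> code_sum A B"
    unfolding code_sum_def using assms by force+
  then show "dual_code (code_sum A B) \<subseteq> dual_code A \<inter> dual_code B"
    using dual_code_antimono by blast
  show "dual_code A \<inter> dual_code B \<subseteq> dual_code (code_sum A B)"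
    unfolding dual_code_def code_sum_def by (auto simp: distrib_left sum.distrib)
qed

lemma dual_code_Int:
  fixes A B :: "('a::field ^ 'n::finite) set"
  assumes "linear_code A" "linear_code B"
  shows "dual_code (A \<inter> B) = code_sum (dual_code A) (dual_code B)"
proof -
  have "0 \<in> dual_code A" "0 \<in> dual_code B"
    using linear_code_dual_code unfolding linear_code_def by blast+
  then have "A \<inter> B = dual_code (code_sum (dual_code A) (dual_code B))"
    by (simp add: dual_code_code_sum dual_code_dual_code assms)
  then show ?thesis
    by (simp add: dual_code_dual_code linear_code_code_sum linear_code_dual_code)
qed

lemma code_sum_Int_modular:
  assumes "linear_code Z" "Q \<subseteq> Z"
  shows "code_sum P Q \<inter> Z = code_sum (P \<inter> Z) Q"
proof -
  have "p \<in> Z \<longleftrightarrow> p + q \<in> Z" if "q \<in> Q" for p q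
    using assms that vec.subspace_add vec.subspace_diff[of Z "p + q" q]
    unfolding linear_code_iff_subspace by auto
  then show ?thesis unfolding code_sum_def by blast
qed

lemma dual_code_code_sum_Int_dual_code:
  fixes A B D :: "('a::field ^ 'n::finite) set"
  assumes "linear_code A" "linear_code B" "linear_code D" "dual_code B \<subseteq> D"
  shows "dual_code (code_sum (A \<inter> B) (dual_code D)) = code_sum (dual_code A \<inter> D) (dual_code B)"
proof -
  have "0 \<in> A \<inter> B" "0 \<in> dual_code D"
    using assms(1,2) linear_code_dual_code unfolding linear_code_def by auto
  then have "dual_code (code_sum (A \<inter> B) (dual_code D)) = dual_code (A \<inter> B) \<inter> D"
    by (simp add: dual_code_code_sum dual_code_dual_code assms(3))
  also have "\<dots> = code_sum (dual_code A) (dual_code B) \<inter> D"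
    by (simp add: dual_code_Int assms(1,2))
  also have "\<dots> = code_sum (dual_code A \<inter> D) (dual_code B)"
    using assms(3,4) by (rule code_sum_Int_modular)
  finally show ?thesis .
qed

theorem lemma5p4:
  fixes AX AZ BX BZ :: "('a::{field,finite} ^ 'n::finite) set"
  assumes "linear_code AX" "linear_code AZ" "linear_code BX" "linear_code BZ"
    and "dual_code AX \<subseteq> AZ" and "dual_code BX \<subseteq> BZ"
  defines "CX \<equiv> code_sum (AX \<inter> BX) (dual_code BZ)"
    and "CZ \<equiv> code_sum (AZ \<inter> BZ) (dual_code BX)"
  shows "dual_code CX = code_sum (dual_code AX \<inter> BZ) (dual_code BX)
         \<and> dual_code CZ = code_sum (dual_code AZ \<inter> BX) (dual_code BZ)
         \<and> dual_code CX \<subseteq> CZ"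
proof (intro conjI)
  show CX_dual: "dual_code CX = code_sum (dual_code AX \<inter> BZ) (dual_code BX)"
    unfolding CX_def using assms(1,3,4,6) by (rule dual_code_code_sum_Int_dual_code)
  have "dual_code BZ \<subseteq> BX"
    using dual_code_antimono[OF assms(6)] dual_code_dual_code[OF assms(3)] by simp
  with assms(2,4,3) show "dual_code CZ = code_sum (dual_code AZ \<inter> BX) (dual_code BZ)"
    unfolding CZ_def by (rule dual_code_code_sum_Int_dual_code)
  show "dual_code CX \<subseteq> CZ"
    unfolding CX_dual CZ_def using assms(5) by (intro code_sum_mono) auto
qed

end
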